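(* Let $\alpha,\beta$ be two different complex numbers of modulus $1$. Then there exists a polynomial $f_{\alpha,\beta}$ with complex coefficients such that $f_{\alpha,\beta}(\alpha)=0$ and $f_{\alpha,\beta}(\beta)=|f_{\alpha,\beta}|_{1}$.
   Context: For a polynomial $f(z)=a_nz^n+\dots+a_1z+a_0$ with complex coefficients, $|f|_1:=|a_0|+|a_1|+\dots+|a_n|$. *)

theory Defs
  imports "HOL-Analysis.Analysis" "HOL-Computational_Algebra.Polynomial"
begin

definition l1_norm :: "complex poly \<Rightarrow> real" where
  "l1_norm f = (\<Sum>i\<le>degree f. norm (coeff f i))"

end

theory Submission
  imports Defs
begin

text \<open>
  Put \<open>z = \<alpha> \<beta>\<^sup>-\<^sup>1 \<noteq> 1\<close>. Some power \<open>u = z\<^sup>k\<close>, \<open>k \<ge> 1\<close>, has \<open>Re u \<le> 0\<close>, and \<open>u\<close> is a root of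
  \<open>x\<^sup>2 - 2 Re u x + 1\<close>, whose coefficients are nonnegative reals. Hence
  \<open>p = 1 - 2 Re u x\<^sup>k + x\<^sup>2\<^sup>k\<close> has nonnegative coefficients and vanishes at \<open>z\<close>.
  The rotated polynomial \<open>f(x) = p(x/\<beta>)\<close> vanishes at \<open>\<alpha>\<close>, has the same coefficient moduli
  as \<open>p\<close>, and \<open>f(\<beta>) = p(1)\<close> is the sum of these moduli.
\<close>

lemma exists_power_Re_nonpos:
  fixes z :: complex
  assumes "norm z = 1" and "z \<noteq> 1"
  shows "\<exists>k\<ge>1. Re (z ^ k) \<le> 0"
proof -
  define t where "t = \<bar>Arg z\<bar>"
  have z: "z = cis (Arg z)"
    using assms(1) rcis_cmod_Arg[of z] by (simp add: rcis_def)
  have "Arg z \<noteq> 0"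
    using assms(2) z by auto
  then have t: "0 < t" "t \<le> pi"
    using mpi_less_Arg[of z] Arg_le_pi[of z] by (auto simp: t_def)
  define k where "k = nat \<lceil>pi / (2 * t)\<rceil>"
  have "pi / (2 * t) \<le> real k" "real k < pi / (2 * t) + 1"
    using t by (auto simp: k_def) linarith
  then have k: "pi / 2 \<le> real k * t" "real k * t < pi / 2 + t"
    using t by (auto simp: field_simps)
  have "k \<ge> 1"
    using k(1) pi_gt_zero by (cases k) auto
  \<comment> \<open>\<open>k t\<close> lands in \<open>[\<pi>/2, 3\<pi>/2]\<close>, where the cosine is nonpositive.\<close>
  have "Re (z ^ k) = cos (real k * Arg z)"
    by (subst z) (simp add: cos_n_Re_cis_pow_n)
  also have "\<dots> = cos (real k * t)"
    by (simp add: t_def abs_if)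
  also have "\<dots> = - sin (real k * t - pi / 2)"
    by (simp add: sin_diff)
  also have "\<dots> \<le> 0"
    using k t by (intro neg_le_0_iff_le[THEN iffD2] sin_ge_zero) auto
  finally show ?thesis
    using \<open>k \<ge> 1\<close> by blast
qed

lemma unit_circle_quadratic_root:
  fixes u :: complex
  assumes "norm u = 1"
  shows "1 - of_real (2 * Re u) * u + u ^ 2 = 0"
proof -
  have "u * cnj u = 1"
    using assms complex_norm_square[of u] by simp
  moreover have "of_real (2 * Re u) = u + cnj u"
    by (simp add: complex_add_cnj)
  ultimately show ?thesis
    by (simp add: algebra_simps power2_eq_square)
qed

lemma l1_norm_pcompose_rotation:
  assumes "norm c = 1"
  shows "l1_norm (pcompose p [:0, c:]) = l1_norm p"
proof -
  have "degree (pcompose p [:0, c:]) = degree p"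
    using assms by (auto simp: degree_pcompose)
  then show ?thesis
    using assms by (simp add: l1_norm_def coeff_pcompose_linear norm_mult norm_power)
qed

lemma poly_one_eq_l1_norm:
  assumes "\<And>i. coeff p i \<in> \<real>\<^sub>\<ge>\<^sub>0"
  shows "poly p 1 = of_real (l1_norm p)"
proof -
  have "coeff p i = of_real (norm (coeff p i))" for i
    using assms[of i] by (simp add: nonneg_Reals_cmod_eq_Re complex_nonneg_Reals_iff complex_eq_iff)
  then show ?thesis
    unfolding poly_altdef l1_norm_def by (metis (no_types, lifting) of_real_sum power_one mult_1_right sum.cong)
qed

lemma poly_rotation_eq_l1_norm:
  assumes "norm b = 1" and "\<And>i. coeff p i \<in> \<real>\<^sub>\<ge>\<^sub>0"
  shows "poly (pcompose p [:0, cnj b:]) b = of_real (l1_norm (pcompose p [:0, cnj b:]))"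
proof -
  have "b * cnj b = 1"
    using assms(1) complex_norm_square[of b] by simp
  then show ?thesis
    using assms by (simp add: poly_pcompose poly_one_eq_l1_norm l1_norm_pcompose_rotation)
qed

theorem mainTheorem19:
  fixes \<alpha> \<beta> :: complex
  assumes "norm \<alpha> = 1" and "norm \<beta> = 1" and "\<alpha> \<noteq> \<beta>"
  shows "\<exists>f :: complex poly. f \<noteq> 0 \<and> poly f \<alpha> = 0 \<and> poly f \<beta> = complex_of_real (l1_norm f)"
proof -
  define z where "z = \<alpha> * cnj \<beta>"
  have "cnj \<beta> * \<beta> = 1"
    using assms(2) complex_norm_square[of \<beta>] by (simp add: mult.commute)
  then have "\<alpha> = z * \<beta>"
    by (simp add: z_def mult.assoc)
  then have "norm z = 1" "z \<noteq> 1"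
    using assms by (auto simp: norm_mult)
  then obtain k :: nat where k: "k \<ge> 1" "Re (z ^ k) \<le> 0"
    using exists_power_Re_nonpos by blast
  define a where "a = - 2 * Re (z ^ k)"
  define p :: "complex poly" where "p = 1 + monom (of_real a) k + monom 1 (2 * k)"
  define f where "f = pcompose p [:0, cnj \<beta>:]"
  have "poly f \<alpha> = 1 - of_real (2 * Re (z ^ k)) * z ^ k + (z ^ k) ^ 2"
    by (simp add: f_def p_def poly_pcompose poly_monom z_def a_def power_mult mult.commute)
  also have "\<dots> = 0"
    using \<open>norm z = 1\<close> by (intro unit_circle_quadratic_root) (simp add: norm_power)
  finally have "poly f \<alpha> = 0" .
  moreover have "poly f \<beta> = of_real (l1_norm f)"
    using k assms(2) unfolding f_def
    by (intro poly_rotation_eq_l1_norm) (auto simp: p_def a_def coeff_monom simp del: of_real_minus of_real_mult)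
  moreover have "coeff f 0 = 1"
    using k by (simp add: f_def p_def poly_monom zero_power)
  ultimately show ?thesis
    by (metis coeff_0 zero_neq_one)
qed

end
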